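(* The representable left $k[\Delta_{a,\mathrm{inj}}]$-modules $P_n:=k[\Delta_{a,\mathrm{inj}}]([n],-)$, $n\ge0$, with differentials $P_n\to P_{n-1}$ given by precomposition with $\sum_{i=0}^n(-1)^i\delta^i$, and with augmentation $\varepsilon\colon P_0\to k_\bullet[0]$ equal to $1$ on basis morphisms in nonnegative degrees and $0$ at $[-1]$, form a projective resolution of $k_\bullet[0]$ in the category of left $k[\Delta_{a,\mathrm{inj}}]$-modules.
   Context: $k$ is a field; $k[\mathcal C]$ is the $k$-linearization of a small category. A left module over a $k$-linear category is a $k$-linear functor to $\mathrm{Vect}_k$. $\Delta_{a,\mathrm{inj}}$ has objects $[n]=\{0<\dots<n\}$, $n\ge0$, and $[-1]=\varnothing$, with injective order-preserving maps as morphisms; $\delta^i\colon[n-1]\to[n]$ ($0\le i\le n$) omits $i$. $k_\bullet[0]$ is the left $k[\Delta_{a,\mathrm{inj}}]$-module with value $k$ at $[n]$ for $n\ge0$ and $0$ at $[-1]$, every morphism between nonnegative objects acting by the identity (it is the left Kan extension of the constant module $k$ on $\Delta_{\mathrm{inj}}$ along the inclusion $\Delta_{\mathrm{inj}}\hookrightarrow\Delta_{a,\mathrm{inj}}$). *)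

theory Defs
  imports Main "HOL.Vector_Spaces" "HOL-Library.FuncSet" "HOL-Library.Poly_Mapping"
begin

text \<open>Objects are integers n \<ge> -1; the object [n] is the ordinal {0,...,n} (empty for n = -1).\<close>
definition ob :: "int \<Rightarrow> nat set" where
  "ob n = {i. int i \<le> n}"

definition hom :: "int \<Rightarrow> int \<Rightarrow> (nat \<Rightarrow> nat) set" where
  "hom m n = {f \<in> ob m \<rightarrow>\<^sub>E ob n. inj_on f (ob m) \<and> mono_on (ob m) f}"

definition cmp :: "int \<Rightarrow> (nat \<Rightarrow> nat) \<Rightarrow> (nat \<Rightarrow> nat) \<Rightarrow> (nat \<Rightarrow> nat)" where
  "cmp m g f = compose (ob m) g f"

definition idm :: "int \<Rightarrow> (nat \<Rightarrow> nat)" where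
  "idm m = restrict id (ob m)"

definition delta :: "int \<Rightarrow> nat \<Rightarrow> (nat \<Rightarrow> nat)" where
  "delta n i = (\<lambda>j\<in>ob (n - 1). if j < i then j else Suc j)"

text \<open>A left module (k-linear functor to Vect_k) is given by an ambient k-vector space
  (type 'v with scalar multiplication sc), a subspace V n for each object [n],
  and action maps A m n f : V m \<rightarrow> V n for each morphism f : [m] \<rightarrow> [n],
  which are k-linear and functorial.\<close>
definition is_lmod ::
  "('k::field \<Rightarrow> 'v::ab_group_add \<Rightarrow> 'v) \<Rightarrow> (int \<Rightarrow> 'v set) \<Rightarrow>
   (int \<Rightarrow> int \<Rightarrow> (nat \<Rightarrow> nat) \<Rightarrow> 'v \<Rightarrow> 'v) \<Rightarrow> bool" where
  "is_lmod sc V A \<longleftrightarrow>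
     vector_space sc \<and>
     (\<forall>n\<ge>-1. module.subspace sc (V n)) \<and>
     (\<forall>m\<ge>-1. \<forall>n\<ge>-1. \<forall>f\<in>hom m n.
        (\<forall>x\<in>V m. A m n f x \<in> V n) \<and>
        (\<forall>x\<in>V m. \<forall>y\<in>V m. A m n f (x + y) = A m n f x + A m n f y) \<and>
        (\<forall>c. \<forall>x\<in>V m. A m n f (sc c x) = sc c (A m n f x))) \<and>
     (\<forall>m\<ge>-1. \<forall>x\<in>V m. A m m (idm m) x = x) \<and>
     (\<forall>l\<ge>-1. \<forall>m\<ge>-1. \<forall>n\<ge>-1. \<forall>f\<in>hom l m. \<forall>g\<in>hom m n. \<forall>x\<in>V l.
        A l n (cmp l g f) x = A m n g (A l m f x))"

definition is_lmod_hom ::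
  "('k::field \<Rightarrow> 'v::ab_group_add \<Rightarrow> 'v) \<Rightarrow> (int \<Rightarrow> 'v set) \<Rightarrow>
   (int \<Rightarrow> int \<Rightarrow> (nat \<Rightarrow> nat) \<Rightarrow> 'v \<Rightarrow> 'v) \<Rightarrow>
   ('k \<Rightarrow> 'w::ab_group_add \<Rightarrow> 'w) \<Rightarrow> (int \<Rightarrow> 'w set) \<Rightarrow>
   (int \<Rightarrow> int \<Rightarrow> (nat \<Rightarrow> nat) \<Rightarrow> 'w \<Rightarrow> 'w) \<Rightarrow> (int \<Rightarrow> 'v \<Rightarrow> 'w) \<Rightarrow> bool" where
  "is_lmod_hom sc V A sc' W B eta \<longleftrightarrow>
     (\<forall>n\<ge>-1. (\<forall>x\<in>V n. eta n x \<in> W n) \<and>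
        (\<forall>x\<in>V n. \<forall>y\<in>V n. eta n (x + y) = eta n x + eta n y) \<and>
        (\<forall>c. \<forall>x\<in>V n. eta n (sc c x) = sc' c (eta n x))) \<and>
     (\<forall>m\<ge>-1. \<forall>n\<ge>-1. \<forall>f\<in>hom m n. \<forall>x\<in>V m. eta n (A m n f x) = B m n f (eta m x))"

definition is_lmod_epi where
  "is_lmod_epi sc V A sc' W B p \<longleftrightarrow>
     is_lmod_hom sc V A sc' W B p \<and> (\<forall>n\<ge>-1. p n ` V n = W n)"

definition lifts_against where
  "lifts_against scP VP AP scM VM AM scN VN AN p \<longleftrightarrow>
     (\<forall>g. is_lmod_hom scP VP AP scN VN AN g \<longrightarrow>
        (\<exists>h. is_lmod_hom scP VP AP scM VM AM h \<and>
             (\<forall>n\<ge>-1. \<forall>x\<in>VP n. p n (h n x) = g n x)))"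

text \<open>P_q([m]) is the free k-vector space on hom q m: finitely supported k-valued
  functions on morphisms with support in hom q m.\<close>
definition Psc :: "'k::field \<Rightarrow> ((nat \<Rightarrow> nat) \<Rightarrow>\<^sub>0 'k) \<Rightarrow> ((nat \<Rightarrow> nat) \<Rightarrow>\<^sub>0 'k)" where
  "Psc c p = Poly_Mapping.map (\<lambda>x. c * x) p"

definition PV :: "nat \<Rightarrow> int \<Rightarrow> ((nat \<Rightarrow> nat) \<Rightarrow>\<^sub>0 'k::field) set" where
  "PV q m = {p. Poly_Mapping.keys p \<subseteq> hom (int q) m}"

definition PA :: "nat \<Rightarrow> int \<Rightarrow> int \<Rightarrow> (nat \<Rightarrow> nat) \<Rightarrow>
    ((nat \<Rightarrow> nat) \<Rightarrow>\<^sub>0 'k::field) \<Rightarrow> ((nat \<Rightarrow> nat) \<Rightarrow>\<^sub>0 'k)" where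
  "PA q m n f p = (\<Sum>g\<in>Poly_Mapping.keys p.
      Poly_Mapping.single (cmp (int q) f g) (Poly_Mapping.lookup p g))"

definition Pd :: "nat \<Rightarrow> int \<Rightarrow> ((nat \<Rightarrow> nat) \<Rightarrow>\<^sub>0 'k::field) \<Rightarrow> ((nat \<Rightarrow> nat) \<Rightarrow>\<^sub>0 'k)" where
  "Pd q m p = (\<Sum>g\<in>Poly_Mapping.keys p. \<Sum>i\<le>q.
      Poly_Mapping.single (cmp (int q - 1) g (delta (int q) i))
        ((-1) ^ i * Poly_Mapping.lookup p g))"

definition KV :: "int \<Rightarrow> 'k::field set" where
  "KV m = (if 0 \<le> m then UNIV else {0})"

definition KA :: "int \<Rightarrow> int \<Rightarrow> (nat \<Rightarrow> nat) \<Rightarrow> 'k::field \<Rightarrow> 'k" where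
  "KA m n f x = (if 0 \<le> m then x else 0)"

definition eps :: "int \<Rightarrow> ((nat \<Rightarrow> nat) \<Rightarrow>\<^sub>0 'k::field) \<Rightarrow> 'k" where
  "eps m p = (if 0 \<le> m then (\<Sum>g\<in>Poly_Mapping.keys p. Poly_Mapping.lookup p g) else 0)"

end

theory Submission
  imports Defs
begin

text \<open>Exactness is checked objectwise, with a contracting homotopy at each object [m] that is
  not natural in m. The cone of a basis morphism g : [q] \<rightarrow> [m] is the map [q+1] \<rightarrow> [m] sending
  0 to 0 and j+1 to g j; it is injective exactly when g 0 \<noteq> 0. Put s g = cone g if g 0 \<noteq> 0 and
  s g = 0 otherwise. Then d s + s d = id in degrees q \<ge> 1, and d s + \<iota> \<epsilon> = id in degree 0, where
  \<iota> c is c times the map [0] \<rightarrow> [m] onto 0; together with d d = 0 and \<epsilon> d = 0, which follow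
  from the cosimplicial identities, this gives exactness.
  Projectivity of P_q is the Yoneda lemma: a module map out of P_q is determined by its value on
  id_[q], and the Yoneda extension of any preimage of that value under the epimorphism is a lift.\<close>

definition free_ext :: "('a \<Rightarrow> 'k::zero \<Rightarrow> 'v::comm_monoid_add) \<Rightarrow> ('a \<Rightarrow>\<^sub>0 'k) \<Rightarrow> 'v" where
  "free_ext F p = (\<Sum>g\<in>Poly_Mapping.keys p. F g (Poly_Mapping.lookup p g))"

lemma free_ext_zero [simp]: "free_ext F 0 = 0"
  by (simp add: free_ext_def)

lemma free_ext_single:
  assumes "\<And>g. F g 0 = 0"
  shows "free_ext F (Poly_Mapping.single g c) = F g c"
  using assms by (cases "c = 0") (auto simp: free_ext_def)

lemma free_ext_add:
  fixes F :: "'a \<Rightarrow> 'k::comm_monoid_add \<Rightarrow> 'v::ab_group_add"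
  assumes F_add: "\<And>g a b. F g (a + b) = F g a + F g b"
  shows "free_ext F (p + q) = free_ext F p + free_ext F q"
proof -
  have F_0: "F g 0 = 0" for g
    using F_add[of g 0 0] by simp
  let ?S = "Poly_Mapping.keys p \<union> Poly_Mapping.keys q"
  have free_ext_on_S: "free_ext F r = (\<Sum>g\<in>?S. F g (Poly_Mapping.lookup r g))"
    if "Poly_Mapping.keys r \<subseteq> ?S" for r
    unfolding free_ext_def
    by (rule sum.mono_neutral_left) (use that F_0 in \<open>auto simp: in_keys_iff\<close>)
  show ?thesis
    using keys_add[of p q]
    by (simp add: free_ext_on_S lookup_add F_add sum.distrib)
qed

lemma keys_free_ext_subset:
  assumes "\<And>g c. g \<in> Poly_Mapping.keys p \<Longrightarrow> Poly_Mapping.keys (F g c) \<subseteq> T"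
  shows "Poly_Mapping.keys (free_ext F p) \<subseteq> T"
  unfolding free_ext_def using keys_sum assms by fastforce

lemma additive_sum:
  fixes L :: "'a::comm_monoid_add \<Rightarrow> 'b::ab_group_add"
  assumes "\<And>x y. L (x + y) = L x + L y"
  shows "L (sum u A) = (\<Sum>i\<in>A. L (u i))"
  using sum_comp_morphism[of L u A] assms[of 0 0] assms by (simp add: o_def)

lemma poly_mapping_sum_single:
  "(\<Sum>g\<in>Poly_Mapping.keys p. Poly_Mapping.single g (Poly_Mapping.lookup p g)) = p"
  by (rule poly_mapping_eqI) (simp add: lookup_sum lookup_single when_def in_keys_iff)

text \<open>Additivity is only required on elements supported in \<open>S\<close>, because module actions are
  additive only on their component spaces.\<close>
lemma additive_eq_by_singles:
  fixes L L' :: "('a \<Rightarrow>\<^sub>0 'k::comm_monoid_add) \<Rightarrow> 'v::ab_group_add"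
  assumes L_add: "\<And>x y. Poly_Mapping.keys x \<subseteq> S \<Longrightarrow> Poly_Mapping.keys y \<subseteq> S \<Longrightarrow> L (x + y) = L x + L y"
    and L'_add: "\<And>x y. Poly_Mapping.keys x \<subseteq> S \<Longrightarrow> Poly_Mapping.keys y \<subseteq> S \<Longrightarrow> L' (x + y) = L' x + L' y"
    and singles: "\<And>g c. g \<in> S \<Longrightarrow> L (Poly_Mapping.single g c) = L' (Poly_Mapping.single g c)"
    and p: "Poly_Mapping.keys p \<subseteq> S"
  shows "L p = L' p"
proof -
  have "L (\<Sum>g\<in>A. Poly_Mapping.single g (Poly_Mapping.lookup p g))
      = L' (\<Sum>g\<in>A. Poly_Mapping.single g (Poly_Mapping.lookup p g))"
    if "finite A" "A \<subseteq> S" for A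
    using that
  proof (induction A rule: finite_induct)
    case empty
    then show ?case
      using L_add[of 0 0] L'_add[of 0 0] by simp
  next
    case (insert a A)
    have "Poly_Mapping.keys (\<Sum>g\<in>A. Poly_Mapping.single g (Poly_Mapping.lookup p g)) \<subseteq> S"
      using keys_sum[of "\<lambda>g. Poly_Mapping.single g (Poly_Mapping.lookup p g)" A] insert.prems
      by auto
    then show ?case
      using insert L_add L'_add singles by simp
  qed
  from this[of "Poly_Mapping.keys p"] p show ?thesis
    by (simp add: poly_mapping_sum_single)
qed

lemma lookup_Psc: "Poly_Mapping.lookup (Psc c p) g = c * Poly_Mapping.lookup p g"
  unfolding Psc_def by transfer (simp add: when_def)

lemma Psc_single: "Psc c (Poly_Mapping.single g a) = Poly_Mapping.single g (c * a)"
  unfolding Psc_def by simp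

lemma Psc_add: "Psc c (x + y) = Psc c x + Psc c y"
  by (rule poly_mapping_eqI) (simp add: lookup_Psc lookup_add distrib_left)

lemma keys_Psc_subset: "Poly_Mapping.keys (Psc c p) \<subseteq> Poly_Mapping.keys p"
  by (auto simp: in_keys_iff lookup_Psc)

lemma vector_space_Psc: "vector_space (Psc :: 'k::field \<Rightarrow> _)"
  by unfold_locales (auto intro!: poly_mapping_eqI simp: lookup_Psc lookup_add algebra_simps)

lemma ob_of_nat: "ob (int q) = {..q}"
  by (auto simp: ob_def)

lemma ob_of_nat_minus_1: "ob (int q - 1) = {..<q}"
  by (auto simp: ob_def)

lemma ob_of_nat_plus_1: "ob (int q + 1) = {..Suc q}"
  by (auto simp: ob_def)

lemma hom_mapsto: "f \<in> hom m n \<Longrightarrow> x \<in> ob m \<Longrightarrow> f x \<in> ob n"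
  by (auto simp: hom_def)

lemma hom_nonneg: "f \<in> hom m n \<Longrightarrow> 0 \<le> m \<Longrightarrow> 0 \<le> n"
  using hom_mapsto[of f m n 0] by (simp add: ob_def)

lemma hom_of_nat_neg: "n < 0 \<Longrightarrow> hom (int q) n = {}"
  using hom_nonneg[of _ "int q" n] by fastforce

lemma hom_mono: "g \<in> hom (int q) m \<Longrightarrow> a \<le> b \<Longrightarrow> b \<le> q \<Longrightarrow> g a \<le> g b"
  unfolding hom_def ob_of_nat by (auto simp: mono_on_def)

lemma hom_strict_mono:
  assumes g: "g \<in> hom (int q) m" and "a < b" "b \<le> q"
  shows "g a < g b"
proof -
  have "inj_on g {..q}"
    using g unfolding hom_def ob_of_nat by simp
  then have "g a \<noteq> g b"
    using assms by (auto dest: inj_onD)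
  with hom_mono[OF g, of a b] assms show ?thesis
    by simp
qed

lemma cmp_eq_restrict: "cmp l g f = (\<lambda>x\<in>ob l. g (f x))"
  by (simp add: cmp_def compose_def)

lemma cmp_hom:
  assumes f: "f \<in> hom l m" and g: "g \<in> hom m n"
  shows "cmp l g f \<in> hom l n"
proof -
  have f_ob: "f x \<in> ob m" if "x \<in> ob l" for x
    using f that by (rule hom_mapsto)
  have "inj_on (g \<circ> f) (ob l)"
    using f g f_ob by (intro comp_inj_on) (auto simp: hom_def intro: inj_on_subset)
  moreover have "mono_on (ob l) (g \<circ> f)"
    using f g f_ob by (auto simp: hom_def mono_on_def)
  ultimately show ?thesis
    using f_ob g by (auto simp: hom_def cmp_eq_restrict inj_on_def mono_on_def)
qed

lemma cmp_assoc: "f \<in> hom l m \<Longrightarrow> cmp l (cmp m h g) f = cmp l h (cmp l g f)"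
  unfolding cmp_def by (rule compose_assoc[symmetric]) (auto simp: hom_def)

lemma cmp_idm_left: "f \<in> hom l m \<Longrightarrow> cmp l (idm m) f = f"
  by (auto simp: cmp_def idm_def hom_def compose_def fun_eq_iff PiE_def extensional_def)

lemma cmp_idm_right: "f \<in> hom l m \<Longrightarrow> cmp l f (idm l) = f"
  by (auto simp: cmp_def idm_def hom_def compose_def fun_eq_iff PiE_def extensional_def)

lemma idm_hom: "idm m \<in> hom m m"
  by (auto simp: idm_def hom_def inj_on_def mono_on_def)

lemma delta_hom: "i \<le> q \<Longrightarrow> delta (int q) i \<in> hom (int q - 1) (int q)"
  unfolding delta_def hom_def ob_of_nat ob_of_nat_minus_1
  by (auto simp: inj_on_def mono_on_def)

lemma cmp_delta_apply:
  "x < q \<Longrightarrow> cmp (int q - 1) g (delta (int q) i) x = g (if x < i then x else Suc x)"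
  by (simp add: cmp_eq_restrict delta_def ob_of_nat_minus_1)

lemma cmp_delta_delta:
  assumes "j < i" "i \<le> Suc q"
  shows "cmp (int q - 1) (cmp (int q) g (delta (int (Suc q)) i)) (delta (int q) j)
       = cmp (int q - 1) (cmp (int q) g (delta (int (Suc q)) j)) (delta (int q) (i - 1))"
  using assms
  by (auto simp: cmp_eq_restrict delta_def ob_of_nat ob_of_nat_minus_1 fun_eq_iff)

definition cone :: "nat \<Rightarrow> (nat \<Rightarrow> nat) \<Rightarrow> (nat \<Rightarrow> nat)" where
  "cone q g = (\<lambda>j\<in>ob (int q + 1). if j = 0 then 0 else g (j - 1))"

lemma cone_hom:
  assumes g: "g \<in> hom (int q) m" and g0: "g 0 \<noteq> 0"
  shows "cone q g \<in> hom (int (Suc q)) m"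
proof -
  have g_pos: "0 < g j" if "j \<le> q" for j
    using hom_mono[OF g, of 0 j] g0 that by simp
  have g_ob: "g j \<in> ob m" if "j \<le> q" for j
    using hom_mapsto[OF g] that by (simp add: ob_of_nat)
  have "0 \<in> ob m"
    using g_ob[of 0] by (auto simp: ob_def)
  moreover have "inj_on (cone q g) {..Suc q}"
  proof (rule inj_onI)
    fix x y assume "x \<in> {..Suc q}" "y \<in> {..Suc q}" and eq: "cone q g x = cone q g y"
    then have x: "x - 1 \<le> q" "x \<le> Suc q" and y: "y - 1 \<le> q" "y \<le> Suc q"
      by auto
    show "x = y"
    proof (cases "x = 0 \<or> y = 0")
      case True
      with eq g_pos[OF x(1)] g_pos[OF y(1)] x y show ?thesis
        by (auto simp: cone_def ob_of_nat_plus_1 split: if_splits)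
    next
      case False
      with eq x y have "g (x - 1) = g (y - 1)"
        by (simp add: cone_def ob_of_nat_plus_1)
      with hom_strict_mono[OF g] x y have "x - 1 = y - 1"
        by (metis linorder_neqE_nat less_irrefl)
      with False show ?thesis
        by arith
    qed
  qed
  moreover have "mono_on {..Suc q} (cone q g)"
    using hom_mono[OF g] by (auto simp: mono_on_def cone_def ob_of_nat_plus_1)
  ultimately show ?thesis
    using g_ob unfolding hom_def ob_of_nat by (auto simp: cone_def ob_of_nat_plus_1)
qed

lemma cmp_cone_delta_0: "g \<in> hom (int q) m \<Longrightarrow> cmp (int q) (cone q g) (delta (int (Suc q)) 0) = g"
  by (rule extensionalityI[of _ "ob (int q)"])
     (auto simp: cmp_eq_restrict delta_def cone_def ob_of_nat ob_of_nat_plus_1 hom_def PiE_def)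

lemma cmp_cone_delta_Suc:
  assumes "q \<ge> 1" "i \<le> q"
  shows "cmp (int q) (cone q g) (delta (int (Suc q)) (Suc i))
       = cone (q - 1) (cmp (int q - 1) g (delta (int q) i))"
proof -
  have q: "int (q - 1) + 1 = int q"
    using assms by simp
  show ?thesis
    using assms unfolding cone_def q
    by (auto simp: ob_of_nat_plus_1 cmp_eq_restrict delta_def ob_of_nat ob_of_nat_minus_1 fun_eq_iff)
qed

lemma cone_cmp_delta_0:
  assumes "q \<ge> 1" "g \<in> hom (int q) m" "g 0 = 0"
  shows "cone (q - 1) (cmp (int q - 1) g (delta (int q) 0)) = g"
proof -
  have q: "int (q - 1) + 1 = int q"
    using assms by simp
  show ?thesis
    using assms unfolding cone_def q
    by (intro extensionalityI[of _ "ob (int q)"])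
       (auto simp: cone_def cmp_eq_restrict delta_def ob_of_nat ob_of_nat_minus_1 hom_def PiE_def)
qed

definition vertex0 :: "nat \<Rightarrow> nat" where
  "vertex0 = (\<lambda>j\<in>ob 0. 0)"

lemma vertex0_hom: "0 \<le> m \<Longrightarrow> vertex0 \<in> hom 0 m"
  by (auto simp: vertex0_def hom_def ob_def mono_on_def)

lemma hom_0_eq_vertex0: "g \<in> hom 0 m \<Longrightarrow> g 0 = 0 \<Longrightarrow> g = vertex0"
  by (rule extensionalityI[of _ "ob 0"]) (auto simp: vertex0_def hom_def ob_def PiE_def)

lemma cmp_cone_delta_1: "cmp 0 (cone 0 g) (delta 1 1) = vertex0"
  by (auto simp: vertex0_def cmp_eq_restrict delta_def cone_def ob_def fun_eq_iff)

lemma mem_PV_iff: "x \<in> PV q m \<longleftrightarrow> Poly_Mapping.keys x \<subseteq> hom (int q) m"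
  by (simp add: PV_def)

lemma PV_neg: "m < 0 \<Longrightarrow> PV q m = {0}"
  by (auto simp: mem_PV_iff hom_of_nat_neg)

lemma single_in_PV: "g \<in> hom (int q) m \<Longrightarrow> Poly_Mapping.single g c \<in> PV q m"
  by (simp add: mem_PV_iff)

lemma PA_eq_free_ext: "PA q m n f = free_ext (\<lambda>g c. Poly_Mapping.single (cmp (int q) f g) c)"
  by (simp add: PA_def free_ext_def fun_eq_iff)

lemma PA_add: "PA q m n f (x + y) = PA q m n f x + PA q m n f y"
  unfolding PA_eq_free_ext by (rule free_ext_add) (simp add: single_add)

lemma PA_single: "PA q m n f (Poly_Mapping.single g c) = Poly_Mapping.single (cmp (int q) f g) c"
  unfolding PA_eq_free_ext by (rule free_ext_single) simp

lemma Pd_eq_free_ext: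
  "Pd q m = free_ext (\<lambda>g c. \<Sum>i\<le>q. Poly_Mapping.single (cmp (int q - 1) g (delta (int q) i)) ((-1) ^ i * c))"
  by (simp add: Pd_def free_ext_def fun_eq_iff)

lemma Pd_add: "Pd q m (x + y) = Pd q m x + Pd q m y"
  unfolding Pd_eq_free_ext by (rule free_ext_add) (simp add: single_add distrib_left sum.distrib)

lemma Pd_zero [simp]: "Pd q m 0 = 0"
  by (simp add: Pd_eq_free_ext)

lemma Pd_single: "Pd q m (Poly_Mapping.single g c)
    = (\<Sum>i\<le>q. Poly_Mapping.single (cmp (int q - 1) g (delta (int q) i)) ((-1) ^ i * c))"
  unfolding Pd_eq_free_ext by (rule free_ext_single) simp

lemma eps_add: "eps m (x + y) = eps m x + eps m y"
proof -
  have "free_ext (\<lambda>g c. c) (x + y) = free_ext (\<lambda>g c. c) x + free_ext (\<lambda>g c. c) y"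
    by (rule free_ext_add) simp
  then show ?thesis
    by (simp add: eps_def free_ext_def)
qed

lemma eps_single: "0 \<le> m \<Longrightarrow> eps m (Poly_Mapping.single g c) = c"
  by (cases "c = 0") (simp_all add: eps_def)

lemma PA_PV: "x \<in> PV q m \<Longrightarrow> f \<in> hom m n \<Longrightarrow> PA q m n f x \<in> PV q n"
  unfolding mem_PV_iff PA_eq_free_ext
  by (rule keys_free_ext_subset) (auto intro: cmp_hom)

lemma Pd_PV:
  fixes x :: "(nat \<Rightarrow> nat) \<Rightarrow>\<^sub>0 'k::field"
  assumes "q \<ge> 1" "x \<in> PV q m"
  shows "Pd q m x \<in> PV (q - 1) m"
proof -
  have q: "int (q - 1) = int q - 1"
    using assms by simp
  show ?thesis
    unfolding mem_PV_iff Pd_eq_free_ext q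
  proof (rule keys_free_ext_subset)
    fix g and c :: 'k assume "g \<in> Poly_Mapping.keys x"
    then have "g \<in> hom (int q) m"
      using assms by (auto simp: mem_PV_iff)
    then have "cmp (int q - 1) g (delta (int q) i) \<in> hom (int q - 1) m" if "i \<le> q" for i
      using cmp_hom[OF delta_hom[OF that]] by blast
    then show "Poly_Mapping.keys (\<Sum>i\<le>q. Poly_Mapping.single (cmp (int q - 1) g (delta (int q) i)) ((-1) ^ i * c))
        \<subseteq> hom (int q - 1) m"
      by (intro order.trans[OF keys_sum]) auto
  qed
qed

lemma subspace_PV: "module.subspace (Psc :: 'k::field \<Rightarrow> _) (PV q m)"
proof -
  interpret vector_space "Psc :: 'k \<Rightarrow> _"
    by (rule vector_space_Psc)
  show ?thesis
  proof (rule subspaceI)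
    show "0 \<in> PV q m"
      by (simp add: mem_PV_iff)
    show "x + y \<in> PV q m" if "x \<in> PV q m" "y \<in> PV q m" for x y :: "_ \<Rightarrow>\<^sub>0 'k"
      using that keys_add[of x y] by (auto simp: mem_PV_iff)
    show "Psc c x \<in> PV q m" if "x \<in> PV q m" for c and x :: "_ \<Rightarrow>\<^sub>0 'k"
      using that keys_Psc_subset by (auto simp: mem_PV_iff)
  qed
qed

lemma is_lmod_P: "is_lmod (Psc :: 'k::field \<Rightarrow> _) (PV q) (PA q)"
  unfolding is_lmod_def
proof (intro conjI allI impI ballI)
  show "vector_space (Psc :: 'k \<Rightarrow> _)"
    by (rule vector_space_Psc)
  show "module.subspace (Psc :: 'k \<Rightarrow> _) (PV q n)" for n
    by (rule subspace_PV)
  fix m n f x assume f: "f \<in> hom m n" and x: "(x :: _ \<Rightarrow>\<^sub>0 'k) \<in> PV q m"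
  show "PA q m n f x \<in> PV q n"
    using x f by (rule PA_PV)
  show "PA q m n f (x + y) = PA q m n f x + PA q m n f y" for y
    by (rule PA_add)
  show "PA q m n f (Psc c x) = Psc c (PA q m n f x)" for c
    by (rule additive_eq_by_singles[where S = "hom (int q) m"])
       (use x in \<open>auto simp: PA_add Psc_add PA_single Psc_single mem_PV_iff\<close>)
next
  fix m x assume x: "(x :: _ \<Rightarrow>\<^sub>0 'k) \<in> PV q m"
  show "PA q m m (idm m) x = x"
    by (rule additive_eq_by_singles[where S = "hom (int q) m"])
       (use x in \<open>auto simp: PA_add PA_single mem_PV_iff cmp_idm_left\<close>)
next
  fix l m n f g x assume f: "f \<in> hom l m" and x: "(x :: _ \<Rightarrow>\<^sub>0 'k) \<in> PV q l"
  show "PA q l n (cmp l g f) x = PA q m n g (PA q l m f x)"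
    by (rule additive_eq_by_singles[where S = "hom (int q) l"])
       (use f x in \<open>auto simp: PA_add PA_single mem_PV_iff cmp_assoc\<close>)
qed

lemma vector_space_mult: "vector_space ((*) :: 'k::field \<Rightarrow> 'k \<Rightarrow> 'k)"
  by unfold_locales (auto simp: algebra_simps)

lemma is_lmod_K: "is_lmod ((*) :: 'k::field \<Rightarrow> 'k \<Rightarrow> 'k) KV KA"
  unfolding is_lmod_def
proof (intro conjI allI impI ballI)
  show "vector_space ((*) :: 'k \<Rightarrow> _)"
    by (rule vector_space_mult)
  interpret vector_space "(*) :: 'k \<Rightarrow> _"
    by (rule vector_space_mult)
  show "subspace (KV n :: 'k set)" for n
    by (simp add: KV_def)
  fix m n f x assume f: "f \<in> hom m n" and x: "(x :: 'k) \<in> KV m"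
  show "KA m n f x \<in> KV n"
    using x hom_nonneg[OF f] by (auto simp: KA_def KV_def)
  show "KA m n f (x + y) = KA m n f x + KA m n f y" for y
    by (simp add: KA_def)
  show "KA m n f (c * x) = c * KA m n f x" for c
    by (simp add: KA_def)
next
  fix m x assume "(x :: 'k) \<in> KV m"
  then show "KA m m (idm m) x = x"
    by (auto simp: KA_def KV_def split: if_splits)
next
  fix l m n f g x assume "f \<in> hom l m"
  then show "KA l n (cmp l g f) x = KA m n g (KA l m f (x :: 'k))"
    using hom_nonneg by (simp add: KA_def)
qed

lemma is_lmod_hom_Pd:
  assumes q: "q \<ge> 1"
  shows "is_lmod_hom (Psc :: 'k::field \<Rightarrow> _) (PV q) (PA q) Psc (PV (q - 1)) (PA (q - 1)) (Pd q)"
  unfolding is_lmod_hom_def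
proof (intro conjI allI impI ballI)
  fix n x assume x: "(x :: _ \<Rightarrow>\<^sub>0 'k) \<in> PV q n"
  show "Pd q n x \<in> PV (q - 1) n"
    using q x by (rule Pd_PV)
  show "Pd q n (x + y) = Pd q n x + Pd q n y" for y
    by (rule Pd_add)
  have Psc_sum: "Psc c (sum u A) = (\<Sum>i\<in>A. Psc c (u i))" for c :: 'k and u :: "nat \<Rightarrow> _ \<Rightarrow>\<^sub>0 'k" and A
    by (rule additive_sum) (rule Psc_add)
  show "Pd q n (Psc c x) = Psc c (Pd q n x)" for c
    by (rule additive_eq_by_singles[where S = "hom (int q) n"])
       (use x in \<open>auto simp: Pd_add Psc_add Pd_single Psc_single mem_PV_iff Psc_sum mult.left_commute\<close>)
next
  have q': "int (q - 1) = int q - 1" "int (q - Suc 0) = int q - 1"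
    using q by simp_all
  fix m n f x assume f: "f \<in> hom m n" and x: "(x :: _ \<Rightarrow>\<^sub>0 'k) \<in> PV q m"
  have singles: "Pd q n (PA q m n f (Poly_Mapping.single g c)) = PA (q - 1) m n f (Pd q m (Poly_Mapping.single g c))"
    if g: "g \<in> hom (int q) m" for g and c :: 'k
  proof -
    have "PA (q - 1) m n f (Pd q m (Poly_Mapping.single g c))
        = (\<Sum>i\<le>q. PA (q - 1) m n f (Poly_Mapping.single (cmp (int q - 1) g (delta (int q) i)) ((-1) ^ i * c)))"
      unfolding Pd_single by (rule additive_sum) (rule PA_add)
    also have "\<dots> = (\<Sum>i\<le>q. Poly_Mapping.single (cmp (int q - 1) (cmp (int q) f g) (delta (int q) i)) ((-1) ^ i * c))"
      by (intro sum.cong refl) (simp add: PA_single q' cmp_assoc[OF delta_hom])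
    finally show ?thesis
      by (simp add: PA_single Pd_single)
  qed
  show "Pd q n (PA q m n f x) = PA (q - 1) m n f (Pd q m x)"
    by (rule additive_eq_by_singles[where S = "hom (int q) m"]) (use x singles in \<open>auto simp: PA_add Pd_add mem_PV_iff\<close>)
qed

lemma eps_Psc: "eps m (Psc c x) = c * eps m x"
proof (cases "0 \<le> m")
  case True
  show ?thesis
    by (rule additive_eq_by_singles[where S = UNIV])
       (use True in \<open>auto simp: eps_add Psc_add Psc_single eps_single distrib_left\<close>)
qed (simp add: eps_def)

lemma is_lmod_hom_eps: "is_lmod_hom (Psc :: 'k::field \<Rightarrow> _) (PV 0) (PA 0) (*) KV KA eps"
  unfolding is_lmod_hom_def
proof (intro conjI allI impI ballI)
  fix n and x :: "_ \<Rightarrow>\<^sub>0 'k"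
  show "eps n x \<in> KV n"
    by (simp add: KV_def eps_def)
  show "eps n (x + y) = eps n x + eps n y" for y
    by (rule eps_add)
  show "eps n (Psc c x) = c * eps n x" for c
    by (rule eps_Psc)
next
  fix m n f x assume f: "f \<in> hom m n" and x: "(x :: _ \<Rightarrow>\<^sub>0 'k) \<in> PV 0 m"
  show "eps n (PA 0 m n f x) = KA m n f (eps m x)"
  proof (cases "0 \<le> m")
    case True
    show ?thesis
      by (rule additive_eq_by_singles[where S = "hom (int 0) m"])
         (use True hom_nonneg[OF f] x in \<open>auto simp: KA_def PA_add eps_add PA_single eps_single mem_PV_iff\<close>)
  next
    case False
    with x have "x = 0"
      by (simp add: PV_neg)
    with False show ?thesis
      by (simp add: KA_def PA_eq_free_ext eps_def)
  qed
qed

lemma eps_image: "m \<ge> -1 \<Longrightarrow> (eps m :: _ \<Rightarrow> 'k::field) ` PV 0 m = KV m"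
proof (cases "0 \<le> m")
  case True
  then have "c \<in> (eps m :: _ \<Rightarrow> 'k) ` PV 0 m" for c
    using vertex0_hom single_in_PV[of vertex0 0 m c]
    by (intro image_eqI[where x = "Poly_Mapping.single vertex0 c"]) (auto simp: eps_single)
  with True show ?thesis
    by (auto simp: KV_def)
next
  case False
  then show ?thesis
    by (auto simp: KV_def eps_def PV_neg)
qed

section \<open>Composites of differentials vanish\<close>

lemma double_sum_cancel:
  fixes T :: "nat \<Rightarrow> nat \<Rightarrow> 'v::ab_group_add"
  assumes "\<And>i j. j < i \<Longrightarrow> i \<le> Suc q \<Longrightarrow> T j (i - 1) = - T i j"
  shows "(\<Sum>i\<le>Suc q. \<Sum>j\<le>q. T i j) = 0"
proof -
  let ?P = "{..Suc q} \<times> {..q}"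
  let ?A = "{p \<in> ?P. snd p < fst p}"
  let ?B = "{p \<in> ?P. fst p \<le> snd p}"
  have "(\<Sum>i\<le>Suc q. \<Sum>j\<le>q. T i j) = (\<Sum>p\<in>?P. T (fst p) (snd p))"
    by (simp add: sum.cartesian_product case_prod_beta)
  also have "?P = ?A \<union> ?B"
    by auto
  also have "(\<Sum>p\<in>?A \<union> ?B. T (fst p) (snd p)) = (\<Sum>p\<in>?A. T (fst p) (snd p)) + (\<Sum>p\<in>?B. T (fst p) (snd p))"
    by (rule sum.union_disjoint) auto
  also have "(\<Sum>p\<in>?B. T (fst p) (snd p)) = (\<Sum>p\<in>?A. - T (fst p) (snd p))"
  proof (rule sum.reindex_bij_witness[where i = "\<lambda>(i, j). (j, i - 1)" and j = "\<lambda>(j, i). (Suc i, j)"])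
    fix p assume "p \<in> ?B"
    then show "- T (fst (case p of (j, i) \<Rightarrow> (Suc i, j))) (snd (case p of (j, i) \<Rightarrow> (Suc i, j)))
        = T (fst p) (snd p)"
      using assms[of "fst p" "Suc (snd p)"] by (auto split: prod.split)
  qed auto
  finally show ?thesis
    by (simp add: sum_negf)
qed

lemma Pd_Pd_single: "Pd q m (Pd (Suc q) m (Poly_Mapping.single g c)) = (0 :: _ \<Rightarrow>\<^sub>0 'k::field)"
proof -
  have "Pd q m (Pd (Suc q) m (Poly_Mapping.single g c))
      = (\<Sum>i\<le>Suc q. Pd q m (Poly_Mapping.single (cmp (int q) g (delta (int (Suc q)) i)) ((-1) ^ i * c)))"
  proof -
    have q: "int (Suc q) - 1 = int q"
      by simp
    show ?thesis
      unfolding Pd_single[of "Suc q" m g c] q by (rule additive_sum) (rule Pd_add)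
  qed
  also have "\<dots> = (\<Sum>i\<le>Suc q. \<Sum>j\<le>q. Poly_Mapping.single
      (cmp (int q - 1) (cmp (int q) g (delta (int (Suc q)) i)) (delta (int q) j)) ((-1) ^ j * ((-1) ^ i * c)))"
    by (simp only: Pd_single)
  also have "\<dots> = 0"
  proof (rule double_sum_cancel)
    fix i j :: nat assume ji: "j < i" "i \<le> Suc q"
    then have "(-1::'k) ^ i = - ((-1) ^ (i - 1))"
      by (cases i) auto
    then have "(-1::'k) ^ (i - 1) * ((-1) ^ j * c) = - ((-1) ^ j * ((-1) ^ i * c))"
      by (simp add: algebra_simps)
    with cmp_delta_delta[OF ji, of g]
    show "Poly_Mapping.single (cmp (int q - 1) (cmp (int q) g (delta (int (Suc q)) j)) (delta (int q) (i - 1)))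
          ((-1) ^ (i - 1) * ((-1) ^ j * c))
        = - Poly_Mapping.single (cmp (int q - 1) (cmp (int q) g (delta (int (Suc q)) i)) (delta (int q) j))
          ((-1) ^ j * ((-1) ^ i * c))"
      by (simp add: single_uminus)
  qed
  finally show ?thesis .
qed

lemma Pd_Pd: "Pd q m (Pd (Suc q) m x) = (0 :: _ \<Rightarrow>\<^sub>0 'k::field)"
  by (rule additive_eq_by_singles[where S = UNIV]) (auto simp: Pd_add Pd_Pd_single)

lemma eps_Pd: "eps m (Pd 1 m x) = (0 :: 'k::field)"
proof (cases "0 \<le> m")
  case True
  show ?thesis
    by (rule additive_eq_by_singles[where S = UNIV])
       (use True in \<open>auto simp: Pd_add eps_add Pd_single eps_single\<close>)
qed (simp add: eps_def)

section \<open>Contracting homotopy and exactness\<close>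

definition Pcone :: "nat \<Rightarrow> ((nat \<Rightarrow> nat) \<Rightarrow>\<^sub>0 'k::field) \<Rightarrow> ((nat \<Rightarrow> nat) \<Rightarrow>\<^sub>0 'k)" where
  "Pcone q = free_ext (\<lambda>g c. if g 0 \<noteq> 0 then Poly_Mapping.single (cone q g) c else 0)"

lemma Pcone_add: "Pcone q (x + y) = Pcone q x + Pcone q y"
  unfolding Pcone_def by (rule free_ext_add) (simp add: single_add)

lemma Pcone_single:
  "Pcone q (Poly_Mapping.single g c) = (if g 0 \<noteq> 0 then Poly_Mapping.single (cone q g) c else 0)"
  unfolding Pcone_def by (rule free_ext_single) simp

lemma Pcone_zero [simp]: "Pcone q 0 = 0"
  by (simp add: Pcone_def)

lemma Pcone_PV: "x \<in> PV q m \<Longrightarrow> Pcone q x \<in> PV (Suc q) m"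
  unfolding mem_PV_iff Pcone_def
  by (rule keys_free_ext_subset) (use cone_hom in \<open>auto simp: mem_PV_iff\<close>)

text \<open>The faces of cone g are g itself and, with the opposite sign, the cones of the faces of g;
  the latter cancel against s d g.\<close>
lemma contracting_homotopy_single_cone:
  assumes q: "q \<ge> 1" and g: "g \<in> hom (int q) m" and g0: "g 0 \<noteq> 0"
  shows "Pd (Suc q) m (Pcone q (Poly_Mapping.single g c)) + Pcone (q - 1) (Pd q m (Poly_Mapping.single g c))
         = Poly_Mapping.single g (c :: 'k::field)"
proof -
  define D where "D i = cmp (int q - 1) g (delta (int q) i)" for i
  have "0 < g 0" "g 0 < g 1"
    using g0 hom_strict_mono[OF g, of 0 1] q by auto
  then have D0: "D i 0 \<noteq> 0" for i
    using q by (auto simp: D_def cmp_delta_apply)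
  have "Pcone (q - 1) (Pd q m (Poly_Mapping.single g c))
      = (\<Sum>i\<le>q. Pcone (q - 1) (Poly_Mapping.single (D i) ((-1) ^ i * c)))"
    unfolding Pd_single D_def by (rule additive_sum) (rule Pcone_add)
  also have "\<dots> = (\<Sum>i\<le>q. Poly_Mapping.single (cone (q - 1) (D i)) ((-1) ^ i * c))"
    by (simp add: Pcone_single D0)
  finally have Pcone_Pd: "Pcone (q - 1) (Pd q m (Poly_Mapping.single g c))
      = (\<Sum>i\<le>q. Poly_Mapping.single (cone (q - 1) (D i)) ((-1) ^ i * c))" .
  have Suc_q: "int (Suc q) - 1 = int q"
    by simp
  have "Pd (Suc q) m (Pcone q (Poly_Mapping.single g c))
      = (\<Sum>i\<le>Suc q. Poly_Mapping.single (cmp (int q) (cone q g) (delta (int (Suc q)) i)) ((-1) ^ i * c))"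
    unfolding Pcone_single using g0 Pd_single[of "Suc q" m "cone q g" c] Suc_q by simp
  also have "\<dots> = Poly_Mapping.single (cmp (int q) (cone q g) (delta (int (Suc q)) 0)) c
      + (\<Sum>i\<le>q. Poly_Mapping.single (cmp (int q) (cone q g) (delta (int (Suc q)) (Suc i))) ((-1) ^ Suc i * c))"
    by (subst sum.atMost_Suc_shift) simp
  also have "\<dots> = Poly_Mapping.single g c + (\<Sum>i\<le>q. - Poly_Mapping.single (cone (q - 1) (D i)) ((-1) ^ i * c))"
    unfolding cmp_cone_delta_0[OF g] D_def
    by (intro arg_cong2[where f = "(+)"] refl sum.cong)
       (simp_all del: of_nat_Suc add: cmp_cone_delta_Suc[OF q] single_uminus)
  finally show ?thesis
    using Pcone_Pd by (simp add: sum_negf)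
qed

text \<open>Here s g = 0, and of the faces of g only the one omitting the vertex 0 has a cone, namely g.\<close>
lemma contracting_homotopy_single_not_cone:
  assumes q: "q \<ge> 1" and g: "g \<in> hom (int q) m" and g0: "g 0 = 0"
  shows "Pd (Suc q) m (Pcone q (Poly_Mapping.single g c)) + Pcone (q - 1) (Pd q m (Poly_Mapping.single g c))
         = Poly_Mapping.single g (c :: 'k::field)"
proof -
  obtain p where p: "q = Suc p"
    using q by (cases q) auto
  define D where "D i = cmp (int q - 1) g (delta (int q) i)" for i
  have D0: "D i 0 = g (if 0 < i then 0 else 1)" for i
    using q by (simp add: D_def cmp_delta_apply)
  have "Pcone (q - 1) (Pd q m (Poly_Mapping.single g c))
      = (\<Sum>i\<le>q. Pcone (q - 1) (Poly_Mapping.single (D i) ((-1) ^ i * c)))"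
    unfolding Pd_single D_def by (rule additive_sum) (rule Pcone_add)
  also have "\<dots> = Pcone (q - 1) (Poly_Mapping.single (D 0) c)
      + (\<Sum>i\<le>p. Pcone (q - 1) (Poly_Mapping.single (D (Suc i)) ((-1) ^ Suc i * c)))"
    by (simp only: p sum.atMost_Suc_shift power_0 mult_1)
  also have "(\<Sum>i\<le>p. Pcone (q - 1) (Poly_Mapping.single (D (Suc i)) ((-1) ^ Suc i * c))) = 0"
    by (simp add: Pcone_single D0 g0)
  also have "Pcone (q - 1) (Poly_Mapping.single (D 0) c) = Poly_Mapping.single g c"
    using D0[of 0] hom_strict_mono[OF g, of 0 1] q g0 cone_cmp_delta_0[OF q g g0]
    by (simp add: Pcone_single D_def)
  finally show ?thesis
    using g0 by (simp add: Pcone_single)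
qed

lemma contracting_homotopy_single:
  assumes "q \<ge> 1" "g \<in> hom (int q) m"
  shows "Pd (Suc q) m (Pcone q (Poly_Mapping.single g c)) + Pcone (q - 1) (Pd q m (Poly_Mapping.single g c))
         = Poly_Mapping.single g (c :: 'k::field)"
  using contracting_homotopy_single_cone[OF assms] contracting_homotopy_single_not_cone[OF assms]
  by (cases "g 0 = 0") auto

lemma contracting_homotopy:
  assumes q: "q \<ge> 1" and x: "x \<in> PV q m"
  shows "Pd (Suc q) m (Pcone q x) + Pcone (q - 1) (Pd q m x) = (x :: _ \<Rightarrow>\<^sub>0 'k::field)"
  by (rule additive_eq_by_singles[where S = "hom (int q) m"])
     (use x contracting_homotopy_single[OF q] in \<open>auto simp: mem_PV_iff Pd_add Pcone_add algebra_simps\<close>)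

lemma contracting_homotopy_0_single:
  assumes g: "g \<in> hom 0 m"
  shows "Pd 1 m (Pcone 0 (Poly_Mapping.single g c)) + Poly_Mapping.single vertex0 (eps m (Poly_Mapping.single g c))
         = Poly_Mapping.single g (c :: 'k::field)"
proof -
  have m: "0 \<le> m"
    using hom_nonneg[OF g] by simp
  show ?thesis
  proof (cases "g 0 = 0")
    case True
    with hom_0_eq_vertex0[OF g] m show ?thesis
      by (simp add: Pcone_single eps_single)
  next
    case False
    have "Pd 1 m (Pcone 0 (Poly_Mapping.single g c)) = Pd 1 m (Poly_Mapping.single (cone 0 g) c)"
      using False by (simp add: Pcone_single)
    also have "\<dots> = Poly_Mapping.single g c - Poly_Mapping.single vertex0 c"
      using Pd_single[of 1 m "cone 0 g" c] cmp_cone_delta_0[of g 0 m] g cmp_cone_delta_1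
      by (simp add: single_uminus)
    finally show ?thesis
      using m by (simp add: eps_single)
  qed
qed

lemma contracting_homotopy_0:
  assumes x: "x \<in> PV 0 m"
  shows "Pd 1 m (Pcone 0 x) + Poly_Mapping.single vertex0 (eps m x) = (x :: _ \<Rightarrow>\<^sub>0 'k::field)"
  by (rule additive_eq_by_singles[where S = "hom 0 m"])
     (use x contracting_homotopy_0_single in
       \<open>auto simp: mem_PV_iff Pd_add Pcone_add eps_add single_add algebra_simps\<close>)

lemma kernel_eq_image_by_homotopy:
  assumes "d ` B \<subseteq> A" "\<And>y. y \<in> B \<Longrightarrow> e (d y) = 0"
    and "h ` A \<subseteq> B" "\<And>x. x \<in> A \<Longrightarrow> e x = 0 \<Longrightarrow> d (h x) = x"
  shows "{x \<in> A. e x = 0} = d ` B"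
proof (intro equalityI subsetI)
  fix x assume "x \<in> {x \<in> A. e x = 0}"
  with assms(3,4) show "x \<in> d ` B"
    by (metis (mono_tags, lifting) image_eqI image_subset_iff mem_Collect_eq)
qed (use assms in auto)

lemma exact_at_P0: "{x \<in> PV 0 m. (eps m x :: 'k::field) = 0} = Pd 1 m ` PV 1 m"
proof (rule kernel_eq_image_by_homotopy[where h = "Pcone 0"])
  show "Pd 1 m ` PV 1 m \<subseteq> PV 0 m"
    using Pd_PV[of 1 _ m] by auto
  show "Pcone 0 ` PV 0 m \<subseteq> PV 1 m"
    using Pcone_PV[of _ 0 m] by auto
  show "Pd 1 m (Pcone 0 x) = x" if "x \<in> PV 0 m" "eps m x = (0 :: 'k)" for x
    using contracting_homotopy_0[OF that(1)] that(2) by simp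
qed (rule eps_Pd)

lemma exact_at_Pq:
  assumes "q \<ge> 1"
  shows "{x \<in> PV q m. Pd q m x = (0 :: _ \<Rightarrow>\<^sub>0 'k::field)} = Pd (q + 1) m ` PV (q + 1) m"
proof (rule kernel_eq_image_by_homotopy[where h = "Pcone q"])
  show "Pd (q + 1) m ` PV (q + 1) m \<subseteq> PV q m"
    using Pd_PV[of "q + 1" _ m] by auto
  show "Pd q m (Pd (q + 1) m y) = 0" for y :: "_ \<Rightarrow>\<^sub>0 'k"
    using Pd_Pd[of q m y] by simp
  show "Pcone q ` PV q m \<subseteq> PV (q + 1) m"
    using Pcone_PV[of _ q m] by auto
  show "Pd (q + 1) m (Pcone q x) = x" if "x \<in> PV q m" "Pd q m x = (0 :: _ \<Rightarrow>\<^sub>0 'k)" for x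
    using contracting_homotopy[OF assms that(1)] that(2) by simp
qed

section \<open>Projectivity\<close>

lemma is_lmod_hom_comp:
  assumes "is_lmod_hom sc U A sc' V B eta" "is_lmod_hom sc' V B sc'' W C theta"
  shows "is_lmod_hom sc U A sc'' W C (\<lambda>n x. theta n (eta n x))"
  using assms unfolding is_lmod_hom_def by fastforce

lemma lmod_hom_from_P_eqI:
  fixes eta theta :: "int \<Rightarrow> ((nat \<Rightarrow> nat) \<Rightarrow>\<^sub>0 'k::field) \<Rightarrow> 'v::ab_group_add"
  assumes eta: "is_lmod_hom Psc (PV q) (PA q) sc V B eta"
    and theta: "is_lmod_hom Psc (PV q) (PA q) sc V B theta"
    and generator: "eta (int q) (Poly_Mapping.single (idm (int q)) 1)
                  = theta (int q) (Poly_Mapping.single (idm (int q)) 1)"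
    and n: "n \<ge> -1" and x: "x \<in> PV q n"
  shows "eta n x = theta n x"
proof (rule additive_eq_by_singles[where S = "hom (int q) n"])
  let ?u = "Poly_Mapping.single (idm (int q)) (1 :: 'k)"
  have u: "?u \<in> PV q (int q)"
    by (rule single_in_PV) (rule idm_hom)
  have via_generator: "zeta n (Poly_Mapping.single f c) = sc c (B (int q) n f (zeta (int q) ?u))"
    if zeta: "is_lmod_hom Psc (PV q) (PA q) sc V B zeta" and f: "f \<in> hom (int q) n" for zeta f c
  proof -
    have "Poly_Mapping.single f c = Psc c (PA q (int q) n f ?u)"
      using f by (simp add: PA_single cmp_idm_right Psc_single)
    moreover have "PA q (int q) n f ?u \<in> PV q n"
      using u f by (rule PA_PV)
    ultimately show ?thesis
      using zeta f n u unfolding is_lmod_hom_def by simp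
  qed
  fix f c assume "f \<in> hom (int q) n"
  then show "eta n (Poly_Mapping.single f c) = theta n (Poly_Mapping.single f c)"
    using via_generator[OF eta] via_generator[OF theta] generator by simp
qed (use eta theta n x in \<open>auto simp: is_lmod_hom_def mem_PV_iff\<close>)

lemma is_lmod_subspace:
  assumes "is_lmod sc V A" "n \<ge> -1"
  shows "module.subspace sc (V n)"
proof -
  from assms(1) have "\<forall>n\<ge>-1. module.subspace sc (V n)"
    unfolding is_lmod_def by (elim conjE)
  with assms(2) show ?thesis
    by blast
qed

lemma is_lmod_action:
  assumes "is_lmod sc V A" "m \<ge> -1" "n \<ge> -1" "f \<in> hom m n" "w \<in> V m" "w' \<in> V m"
  shows "A m n f w \<in> V n" "A m n f (w + w') = A m n f w + A m n f w'"
    "A m n f (sc c w) = sc c (A m n f w)"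
proof -
  from assms(1) have "\<forall>m\<ge>-1. \<forall>n\<ge>-1. \<forall>f\<in>hom m n.
      (\<forall>x\<in>V m. A m n f x \<in> V n) \<and> (\<forall>x\<in>V m. \<forall>y\<in>V m. A m n f (x + y) = A m n f x + A m n f y) \<and>
      (\<forall>c. \<forall>x\<in>V m. A m n f (sc c x) = sc c (A m n f x))"
    unfolding is_lmod_def by (elim conjE)
  with assms(2-6) show "A m n f w \<in> V n" "A m n f (w + w') = A m n f w + A m n f w'"
    "A m n f (sc c w) = sc c (A m n f w)"
    by blast+
qed

lemma is_lmod_idm:
  assumes "is_lmod sc V A" "m \<ge> -1" "x \<in> V m"
  shows "A m m (idm m) x = x"
proof -
  from assms(1) have "\<forall>m\<ge>-1. \<forall>x\<in>V m. A m m (idm m) x = x"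
    unfolding is_lmod_def by (elim conjE)
  with assms(2,3) show ?thesis
    by blast
qed

lemma is_lmod_cmp:
  assumes "is_lmod sc V A" "l \<ge> -1" "m \<ge> -1" "n \<ge> -1" "f \<in> hom l m" "g \<in> hom m n" "x \<in> V l"
  shows "A l n (cmp l g f) x = A m n g (A l m f x)"
proof -
  from assms(1) have "\<forall>l\<ge>-1. \<forall>m\<ge>-1. \<forall>n\<ge>-1. \<forall>f\<in>hom l m. \<forall>g\<in>hom m n. \<forall>x\<in>V l.
      A l n (cmp l g f) x = A m n g (A l m f x)"
    unfolding is_lmod_def by (elim conjE)
  with assms(2-7) show ?thesis
    by blast
qed

definition yoneda_ext ::
  "('k::field \<Rightarrow> 'v::ab_group_add \<Rightarrow> 'v) \<Rightarrow> (int \<Rightarrow> int \<Rightarrow> (nat \<Rightarrow> nat) \<Rightarrow> 'v \<Rightarrow> 'v) \<Rightarrow>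
   nat \<Rightarrow> 'v \<Rightarrow> int \<Rightarrow> ((nat \<Rightarrow> nat) \<Rightarrow>\<^sub>0 'k) \<Rightarrow> 'v" where
  "yoneda_ext sc A q v n = free_ext (\<lambda>f c. sc c (A (int q) n f v))"

context
  fixes sc :: "'k::field \<Rightarrow> 'v::ab_group_add \<Rightarrow> 'v" and V A q v
  assumes lmod: "is_lmod sc V A" and v: "v \<in> V (int q)"
begin

interpretation module sc
  using lmod by (simp add: is_lmod_def module_iff_vector_space)

lemma yoneda_ext_single: "yoneda_ext sc A q v n (Poly_Mapping.single f c) = sc c (A (int q) n f v)"
  unfolding yoneda_ext_def by (rule free_ext_single) simp

lemma yoneda_ext_add: "yoneda_ext sc A q v n (x + y) = yoneda_ext sc A q v n x + yoneda_ext sc A q v n y"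
  unfolding yoneda_ext_def by (rule free_ext_add) (simp add: scale_left_distrib)

lemma yoneda_ext_generator: "yoneda_ext sc A q v (int q) (Poly_Mapping.single (idm (int q)) 1) = v"
  using is_lmod_idm[OF lmod _ v] by (simp add: yoneda_ext_single)

lemma yoneda_ext_in_V:
  assumes n: "n \<ge> -1" and x: "x \<in> PV q n"
  shows "yoneda_ext sc A q v n x \<in> V n"
  unfolding yoneda_ext_def free_ext_def
proof (rule subspace_sum)
  show V_n: "subspace (V n)"
    using lmod n by (rule is_lmod_subspace)
  fix f assume "f \<in> Poly_Mapping.keys x"
  with x have "f \<in> hom (int q) n"
    by (auto simp: mem_PV_iff)
  with n v is_lmod_action(1)[OF lmod, of "int q" n f v v]
  show "sc (Poly_Mapping.lookup x f) (A (int q) n f v) \<in> V n"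
    by (intro subspace_scale V_n) simp
qed

lemma yoneda_ext_natural:
  assumes m: "m \<ge> -1" and n: "n \<ge> -1" and f: "f \<in> hom m n" and x: "x \<in> PV q m"
  shows "yoneda_ext sc A q v n (PA q m n f x) = A m n f (yoneda_ext sc A q v m x)"
proof (rule additive_eq_by_singles[where S = "hom (int q) m"])
  fix g c assume g: "g \<in> hom (int q) m"
  have Agv: "A (int q) m g v \<in> V m"
    using is_lmod_action(1)[OF lmod _ m g v v] by simp
  show "yoneda_ext sc A q v n (PA q m n f (Poly_Mapping.single g c))
      = A m n f (yoneda_ext sc A q v m (Poly_Mapping.single g c))"
    using is_lmod_cmp[OF lmod _ m n g f v] is_lmod_action(3)[OF lmod m n f Agv Agv]
    by (simp add: PA_single yoneda_ext_single)
qed (use x yoneda_ext_in_V[OF m] is_lmod_action(2)[OF lmod m n f] in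
      \<open>auto simp: PA_add yoneda_ext_add mem_PV_iff\<close>)

lemma is_lmod_hom_yoneda_ext: "is_lmod_hom Psc (PV q) (PA q) sc V A (yoneda_ext sc A q v)"
  unfolding is_lmod_hom_def
proof (intro conjI allI impI ballI)
  fix n and x :: "(nat \<Rightarrow> nat) \<Rightarrow>\<^sub>0 'k" assume n: "n \<ge> -1" and x: "x \<in> PV q n"
  show "yoneda_ext sc A q v n x \<in> V n"
    using n x by (rule yoneda_ext_in_V)
  show "yoneda_ext sc A q v n (x + y) = yoneda_ext sc A q v n x + yoneda_ext sc A q v n y" for y
    by (rule yoneda_ext_add)
  show "yoneda_ext sc A q v n (Psc c x) = sc c (yoneda_ext sc A q v n x)" for c
    by (rule additive_eq_by_singles[where S = UNIV])
       (simp_all only: Psc_add Psc_single yoneda_ext_add yoneda_ext_single scale_right_distrib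
         scale_scale subset_UNIV)
next
  fix m n f and x :: "(nat \<Rightarrow> nat) \<Rightarrow>\<^sub>0 'k"
  assume "m \<ge> -1" "n \<ge> -1" "f \<in> hom m n" "x \<in> PV q m"
  then show "yoneda_ext sc A q v n (PA q m n f x) = A m n f (yoneda_ext sc A q v m x)"
    by (rule yoneda_ext_natural)
qed

end

lemma lifts_against_P:
  assumes M: "is_lmod scM VM AM" and p: "is_lmod_epi scM VM AM scN VN AN p"
  shows "lifts_against (Psc :: 'k::field \<Rightarrow> _) (PV q) (PA q) scM VM AM scN VN AN p"
  unfolding lifts_against_def
proof (intro allI impI)
  fix g assume g: "is_lmod_hom (Psc :: 'k \<Rightarrow> _) (PV q) (PA q) scN VN AN g"
  let ?u = "Poly_Mapping.single (idm (int q)) (1 :: 'k)"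
  have u: "?u \<in> PV q (int q)"
    by (rule single_in_PV) (rule idm_hom)
  with g have "g (int q) ?u \<in> VN (int q)"
    unfolding is_lmod_hom_def by simp
  moreover have "p (int q) ` VM (int q) = VN (int q)"
    using p unfolding is_lmod_epi_def by simp
  ultimately obtain v where v: "v \<in> VM (int q)" and pv: "p (int q) v = g (int q) ?u"
    by (metis imageE)
  have p_hom: "is_lmod_hom scM VM AM scN VN AN p"
    using p by (simp add: is_lmod_epi_def)
  let ?h = "yoneda_ext scM AM q v"
  have h: "is_lmod_hom Psc (PV q) (PA q) scM VM AM ?h"
    using M v by (rule is_lmod_hom_yoneda_ext)
  have "p n (?h n x) = g n x" if "n \<ge> -1" "x \<in> PV q n" for n x
  proof (rule lmod_hom_from_P_eqI[OF is_lmod_hom_comp[OF h p_hom] g _ that])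
    show "p (int q) (?h (int q) ?u) = g (int q) ?u"
      by (simp add: yoneda_ext_generator[OF M v] pv)
  qed
  with h show "\<exists>h. is_lmod_hom Psc (PV q) (PA q) scM VM AM h \<and> (\<forall>n\<ge>-1. \<forall>x\<in>PV q n. p n (h n x) = g n x)"
    by blast
qed

theorem lemma3p6:
  fixes k_witness :: "'k::field itself"
  shows
  "(\<forall>q. is_lmod (Psc :: 'k \<Rightarrow> _) (PV q) (PA q)) \<and>
   is_lmod ((*) :: 'k \<Rightarrow> 'k \<Rightarrow> 'k) KV KA \<and>
   (\<forall>q\<ge>1. is_lmod_hom (Psc :: 'k \<Rightarrow> _) (PV q) (PA q) Psc (PV (q - 1)) (PA (q - 1)) (Pd q)) \<and>
   is_lmod_hom (Psc :: 'k \<Rightarrow> _) (PV 0) (PA 0) (*) KV KA eps \<and>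
   (\<forall>m\<ge>-1. (eps m :: _ \<Rightarrow> 'k) ` PV 0 m = KV m) \<and>
   (\<forall>m\<ge>-1. {x \<in> PV 0 m. (eps m x :: 'k) = 0} = Pd 1 m ` PV 1 m) \<and>
   (\<forall>q\<ge>1. \<forall>m\<ge>-1. {x \<in> PV q m. Pd q m x = (0 :: _ \<Rightarrow>\<^sub>0 'k)} = Pd (q + 1) m ` PV (q + 1) m) \<and>
   (\<forall>(scM :: 'k \<Rightarrow> 'm::ab_group_add \<Rightarrow> 'm) VM AM (scN :: 'k \<Rightarrow> 'n::ab_group_add \<Rightarrow> 'n) VN AN p.
      is_lmod scM VM AM \<and> is_lmod scN VN AN \<and> is_lmod_epi scM VM AM scN VN AN p \<longrightarrow>
      (\<forall>q. lifts_against (Psc :: 'k \<Rightarrow> _) (PV q) (PA q) scM VM AM scN VN AN p))"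
  by (intro conjI allI impI is_lmod_P is_lmod_K is_lmod_hom_Pd is_lmod_hom_eps eps_image exact_at_P0
      exact_at_Pq) (auto intro: lifts_against_P)

end
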